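(* Let $K\subset\mathbb{C}^2$ be compact, nonpluripolar, and satisfy $e^{i\theta}\circ K=K$ for all $\theta\in\mathbb{R}$. Let $\theta\in\mathcal{C}$ and let $\{Q_n\}$, $Q_n\in M^{\prec_C}_{k_n}(\alpha_n)$, be $\theta$-asymptotically Chebyshev for $K$. Then $\{\widehat Q_n\}$ is $\theta$-asymptotically Chebyshev for $K$, where $\widehat Q_n$ is the top part of $Q_n$ relative to $Poly(k_nC)$.
   Context: $a,b$ relatively prime positive integers; $C$ the triangle with vertices $(0,0),(b,0),(0,a)$; $Poly(kC)$ is the space of $p=\sum_{aj+bl\le kab}c_{jl}z_1^jz_2^l$ with top part $\widehat p=\sum_{aj+bl=kab}c_{jl}z_1^jz_2^l$; $\deg_C(p)=\min\{k:p\in Poly(kC)\}$. $\lambda\circ(z_1,z_2)=(\lambda^az_1,\lambda^bz_2)$. Order $\prec_C$: $\alpha\prec_C\beta$ if $\deg_C(z^\alpha)<\deg_C(z^\beta)$, or equal $C$-degrees and $\alpha_2<\beta_2$. $M^{\prec_C}_k(\alpha)=\{p\in Poly(kC):p=z^\alpha+\sum_{\beta\prec_C\alpha}c_\beta z^\beta\}$; $T^C_k(K,\alpha)=\inf\{\|p\|_K:p\in M^{\prec_C}_k(\alpha)\}^{1/k}$. $\mathcal{C}=\{\phi:a\phi_1+b\phi_2=ab,\ \phi_1\phi_2>0\}$. For $\theta\in\mathcal{C}$, $\tau(K,\theta)=\lim_{k\to\infty,\alpha/k\to\theta}T^C_k(K,\alpha)$ (this limit exists). $\{Q_n\}$ is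 $\theta$-asymptotically Chebyshev for $K$ if $Q_n\in M^{\prec_C}_{k_n}(\alpha_n)$ with $k_n\to\infty$, $\alpha_n/k_n\to\theta$, and $\|Q_n\|_K^{1/k_n}\to\tau(K,\theta)$.
   Formalization: The C-degree $\deg_C(z^\alpha)$, used in $\prec_C$, is the least real k >= 0 with alpha in kC, and theta-asymptotically Chebyshev sequences, like the limit defining $\tau(K,\theta)$, have each $\alpha_n$ on the top edge of $k_nC$, with real $k_n$. Apart from conventions, each condition added here is assumed in the paper as well or is needed for the statement above to hold. *)

theory Defs
  imports "HOL-Complex_Analysis.Complex_Analysis"
begin

definition usc_fun :: "('a::topological_space \<Rightarrow> ereal) \<Rightarrow> bool" where
  "usc_fun u \<longleftrightarrow> (\<forall>c::ereal. open {z. u z < c})"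

text \<open>Harmonic function on an open disc: real part of a holomorphic function
  (equivalent to the Laplace-equation definition on a disc).\<close>
definition harmonic_on_ball :: "(complex \<Rightarrow> real) \<Rightarrow> complex \<Rightarrow> real \<Rightarrow> bool" where
  "harmonic_on_ball h z0 r \<longleftrightarrow>
     (\<exists>f. f holomorphic_on ball z0 r \<and> (\<forall>z\<in>ball z0 r. h z = Re (f z)))"

text \<open>Subharmonic on the whole plane (the function identically -\<infinity> is allowed):
  upper semicontinuous, never +\<infinity>, and satisfying the harmonic-majorant
  property on every closed disc.\<close>
definition subharmonic :: "(complex \<Rightarrow> ereal) \<Rightarrow> bool" where
  "subharmonic u \<longleftrightarrow> usc_fun u \<and> (\<forall>z. u z < \<infinity>) \<and>
     (\<forall>z0 r h. r > 0 \<longrightarrow> continuous_on (cball z0 r) h \<longrightarrow> harmonic_on_ball h z0 r \<longrightarrow>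
        (\<forall>z\<in>sphere z0 r. u z \<le> ereal (h z)) \<longrightarrow> (\<forall>z\<in>cball z0 r. u z \<le> ereal (h z)))"

definition psh :: "(complex \<times> complex \<Rightarrow> ereal) \<Rightarrow> bool" where
  "psh u \<longleftrightarrow> usc_fun u \<and> (\<forall>z. u z < \<infinity>) \<and>
     (\<forall>p q :: complex \<times> complex.
        subharmonic (\<lambda>w. u (fst p + w * fst q, snd p + w * snd q)))"

definition pluripolar :: "(complex \<times> complex) set \<Rightarrow> bool" where
  "pluripolar E \<longleftrightarrow> (\<exists>u. psh u \<and> (\<exists>z. u z \<noteq> -\<infinity>) \<and> E \<subseteq> {z. u z = -\<infinity>})"

type_synonym poly2 = "nat \<times> nat \<Rightarrow> complex"

definition peval :: "poly2 \<Rightarrow> complex \<times> complex \<Rightarrow> complex" where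
  "peval p z = (\<Sum>\<alpha>\<in>{\<alpha>. p \<alpha> \<noteq> 0}. p \<alpha> * fst z ^ fst \<alpha> * snd z ^ snd \<alpha>)"

definition supnorm :: "(complex \<times> complex) set \<Rightarrow> poly2 \<Rightarrow> real" where
  "supnorm K p = Sup ((\<lambda>z. cmod (peval p z)) ` K)"

text \<open>C-degree of the monomial z^\<alpha> (real-valued: the least k \<ge> 0 with \<alpha> \<in> kC).\<close>
definition degC :: "nat \<Rightarrow> nat \<Rightarrow> nat \<times> nat \<Rightarrow> real" where
  "degC a b \<alpha> = (real a * real (fst \<alpha>) + real b * real (snd \<alpha>)) / (real a * real b)"

definition inPolyC :: "nat \<Rightarrow> nat \<Rightarrow> real \<Rightarrow> poly2 \<Rightarrow> bool" where
  "inPolyC a b k p \<longleftrightarrow> (\<forall>j l. p (j, l) \<noteq> 0 \<longrightarrow>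
      real a * real j + real b * real l \<le> k * real a * real b)"

definition topC :: "nat \<Rightarrow> nat \<Rightarrow> real \<Rightarrow> poly2 \<Rightarrow> poly2" where
  "topC a b k p = (\<lambda>(j, l). if real a * real j + real b * real l = k * real a * real b
                            then p (j, l) else 0)"

definition precC :: "nat \<Rightarrow> nat \<Rightarrow> nat \<times> nat \<Rightarrow> nat \<times> nat \<Rightarrow> bool" where
  "precC a b \<alpha> \<beta> \<longleftrightarrow> degC a b \<alpha> < degC a b \<beta> \<or>
                      (degC a b \<alpha> = degC a b \<beta> \<and> snd \<alpha> < snd \<beta>)"

definition MC :: "nat \<Rightarrow> nat \<Rightarrow> real \<Rightarrow> nat \<times> nat \<Rightarrow> poly2 set" where
  "MC a b k \<alpha> = {p. inPolyC a b k p \<and> p \<alpha> = 1 \<and>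
                     (\<forall>\<beta>. p \<beta> \<noteq> 0 \<longrightarrow> \<beta> = \<alpha> \<or> precC a b \<beta> \<alpha>)}"

definition TC :: "nat \<Rightarrow> nat \<Rightarrow> (complex \<times> complex) set \<Rightarrow> real \<Rightarrow> nat \<times> nat \<Rightarrow> real" where
  "TC a b K k \<alpha> = (Inf (supnorm K ` MC a b k \<alpha>)) powr (1 / k)"

definition scaled :: "nat \<times> nat \<Rightarrow> real \<Rightarrow> real \<times> real" where
  "scaled \<alpha> k = (real (fst \<alpha>) / k, real (snd \<alpha>) / k)"

definition CurveC :: "nat \<Rightarrow> nat \<Rightarrow> (real \<times> real) set" where
  "CurveC a b = {\<phi>. real a * fst \<phi> + real b * snd \<phi> = real a * real b \<and> fst \<phi> * snd \<phi> > 0}"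

definition tau :: "nat \<Rightarrow> nat \<Rightarrow> (complex \<times> complex) set \<Rightarrow> real \<times> real \<Rightarrow> real" where
  "tau a b K \<theta> = (THE t. \<forall>k :: nat \<Rightarrow> real. \<forall>\<alpha> :: nat \<Rightarrow> nat \<times> nat.
      (filterlim k at_top sequentially \<and> (\<forall>n. k n = degC a b (\<alpha> n)) \<and>
       ((\<lambda>n. scaled (\<alpha> n) (k n)) \<longlongrightarrow> \<theta>) sequentially)
      \<longrightarrow> ((\<lambda>n. TC a b K (k n) (\<alpha> n)) \<longlongrightarrow> t) sequentially)"

definition asymp_cheb ::
  "nat \<Rightarrow> nat \<Rightarrow> (complex \<times> complex) set \<Rightarrow> real \<times> real \<Rightarrow>
   (nat \<Rightarrow> poly2) \<Rightarrow> (nat \<Rightarrow> real) \<Rightarrow> (nat \<Rightarrow> nat \<times> nat) \<Rightarrow> bool" where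
  "asymp_cheb a b K \<theta> Q k \<alpha> \<longleftrightarrow>
     (\<forall>n. k n = degC a b (\<alpha> n) \<and> Q n \<in> MC a b (k n) (\<alpha> n)) \<and>
     filterlim k at_top sequentially \<and>
     ((\<lambda>n. scaled (\<alpha> n) (k n)) \<longlongrightarrow> \<theta>) sequentially \<and>
     ((\<lambda>n. supnorm K (Q n) powr (1 / k n)) \<longlongrightarrow> tau a b K \<theta>) sequentially"

end

(*
  Averaging over the circle action recovers the top part: if W = a*j + b*l is the weight of
  the leading monomial of Q and w is a primitive (W+1)-th root of unity, then the mean of
  w^r Q(w^(r*a) z1, w^(r*b) z2) over r keeps exactly the monomials of weight W.  As K is
  invariant, the top part therefore has sup norm at most that of Q; being monic with the same
  leading monomial, it also has norm at least the Chebyshev minimum.  A sandwich then gives the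
  theorem, once the directional Chebyshev constant is known to be the limit of T_k along every
  sequence with alpha/k -> theta.  That limit exists because the minimal norms are
  submultiplicative: a multi-index beta near the ray of theta, of much larger degree than
  alpha, splits as j*alpha + gamma with gamma of comparatively small degree, so its Chebyshev
  root is at most that of alpha up to a factor close to 1; hence limsup <= liminf along any
  two such sequences.
*)
theory Submission
  imports Defs
begin

section \<open>Polynomials in two variables\<close>

definition supp :: "poly2 \<Rightarrow> (nat \<times> nat) set" where
  "supp p = {\<alpha>. p \<alpha> \<noteq> 0}"

definition zpow :: "complex \<times> complex \<Rightarrow> nat \<times> nat \<Rightarrow> complex" where
  "zpow z \<alpha> = fst z ^ fst \<alpha> * snd z ^ snd \<alpha>"

definition pmonom :: "nat \<times> nat \<Rightarrow> poly2" where
  "pmonom \<alpha> \<beta> = (if \<beta> = \<alpha> then 1 else 0)"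

definition pmult :: "poly2 \<Rightarrow> poly2 \<Rightarrow> poly2" where
  "pmult p q \<gamma> = (\<Sum>(\<beta>, \<beta>') \<in> supp p \<times> supp q. if \<beta> + \<beta>' = \<gamma> then p \<beta> * q \<beta>' else 0)"

lemma peval_eq_sum:
  assumes "finite S" "supp p \<subseteq> S"
  shows "peval p z = (\<Sum>\<alpha>\<in>S. p \<alpha> * zpow z \<alpha>)"
  unfolding peval_def zpow_def mult.assoc
  using assms by (intro sum.mono_neutral_left) (auto simp: supp_def)

lemma zpow_add: "zpow z (\<alpha> + \<beta>) = zpow z \<alpha> * zpow z \<beta>"
  by (simp add: zpow_def power_add)

lemma peval_pmonom: "peval (pmonom \<alpha>) z = zpow z \<alpha>"
  by (subst peval_eq_sum[of "{\<alpha>}"]) (auto simp: supp_def pmonom_def)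

lemma supp_pmult: "supp (pmult p q) \<subseteq> (\<lambda>(\<beta>, \<beta>'). \<beta> + \<beta>') ` (supp p \<times> supp q)"
proof
  fix \<gamma> assume "\<gamma> \<in> supp (pmult p q)"
  show "\<gamma> \<in> (\<lambda>(\<beta>, \<beta>'). \<beta> + \<beta>') ` (supp p \<times> supp q)"
  proof (rule ccontr)
    assume "\<gamma> \<notin> (\<lambda>(\<beta>, \<beta>'). \<beta> + \<beta>') ` (supp p \<times> supp q)"
    then have "pmult p q \<gamma> = 0" unfolding pmult_def by (intro sum.neutral) force
    with \<open>\<gamma> \<in> supp (pmult p q)\<close> show False by (simp add: supp_def)
  qed
qed

lemma peval_pmult:
  assumes "finite (supp p)" "finite (supp q)"
  shows "peval (pmult p q) z = peval p z * peval q z"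
proof -
  define P where "P = supp p \<times> supp q"
  define T where "T = (\<lambda>(\<beta>, \<beta>'). \<beta> + \<beta>') ` P"
  have "finite P" "finite T" using assms by (simp_all add: P_def T_def)
  have "peval (pmult p q) z = (\<Sum>\<gamma>\<in>T. pmult p q \<gamma> * zpow z \<gamma>)"
    using supp_pmult \<open>finite T\<close> by (intro peval_eq_sum) (auto simp: T_def P_def)
  also have "\<dots> = (\<Sum>(\<beta>, \<beta>')\<in>P. \<Sum>\<gamma>\<in>T. if \<beta> + \<beta>' = \<gamma> then p \<beta> * q \<beta>' * zpow z \<gamma> else 0)"
    unfolding pmult_def P_def[symmetric] sum_distrib_right
    by (subst sum.swap) (auto simp: case_prod_beta intro!: sum.cong)
  also have "\<dots> = (\<Sum>(\<beta>, \<beta>')\<in>P. p \<beta> * zpow z \<beta> * (q \<beta>' * zpow z \<beta>'))"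
  proof (intro sum.cong refl, clarify)
    fix \<beta> \<beta>' assume "(\<beta>, \<beta>') \<in> P"
    then have "\<beta> + \<beta>' \<in> T" by (force simp: T_def)
    with \<open>finite T\<close> show "(\<Sum>\<gamma>\<in>T. if \<beta> + \<beta>' = \<gamma> then p \<beta> * q \<beta>' * zpow z \<gamma> else 0) =
      p \<beta> * zpow z \<beta> * (q \<beta>' * zpow z \<beta>')"
      by (simp add: zpow_add)
  qed
  also have "\<dots> = peval p z * peval q z"
    using assms by (simp add: P_def sum_product sum.cartesian_product peval_eq_sum)
  finally show ?thesis .
qed

section \<open>Weighted degree and the circle action\<close>

lemma sum_powers_root_unity:
  fixes N s :: nat
  assumes "0 < N"
  shows "(\<Sum>r<N. (exp (2 * of_real pi * \<i> / of_nat N) ^ s) ^ r) = (if N dvd s then of_nat N else 0)"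
proof -
  define x where "x = exp (2 * of_real pi * \<i> * of_nat s / of_nat N)"
  have x: "exp (2 * of_real pi * \<i> / of_nat N) ^ s = x"
    unfolding x_def exp_of_nat_mult[symmetric] by (simp add: mult_ac)
  have "x = 1 \<longleftrightarrow> N dvd s"
    unfolding x_def using assms by (intro complex_root_unity_eq_1) simp
  moreover have "x ^ N = 1"
    unfolding x_def using assms by (intro complex_root_unity) simp
  ultimately show ?thesis
    unfolding x by (simp add: sum_gp_strict)
qed

locale weighted_degree =
  fixes a b :: nat
  assumes a_pos: "0 < a" and b_pos: "0 < b"

begin

definition weight :: "nat \<times> nat \<Rightarrow> nat" where
  "weight \<alpha> = a * fst \<alpha> + b * snd \<alpha>"

lemma degC_eq_weight: "degC a b \<alpha> = real (weight \<alpha>) / (real a * real b)"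
  by (simp add: degC_def weight_def)

lemma degC_le_iff: "degC a b \<alpha> \<le> degC a b \<beta> \<longleftrightarrow> weight \<alpha> \<le> weight \<beta>"
proof -
  have "0 < real a * real b" using a_pos b_pos by simp
  then show ?thesis by (simp add: degC_eq_weight divide_le_cancel)
qed

lemma degC_eq_iff: "degC a b \<alpha> = degC a b \<beta> \<longleftrightarrow> weight \<alpha> = weight \<beta>"
  using a_pos b_pos by (simp add: degC_eq_weight)

lemma degC_times: "degC a b \<alpha> * real a * real b = real (weight \<alpha>)"
  using a_pos b_pos by (simp add: degC_eq_weight)

lemma degC_nonneg: "0 \<le> degC a b \<alpha>"
  by (simp add: degC_eq_weight)

lemma degC_add: "degC a b (\<alpha> + \<beta>) = degC a b \<alpha> + degC a b \<beta>"
  by (simp add: degC_def add_divide_distrib distrib_left)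

lemma degC_scale: "degC a b (j * fst \<alpha>, j * snd \<alpha>) = real j * degC a b \<alpha>"
  by (simp add: degC_def field_simps)

lemma degC_sub_scale:
  assumes "j * fst \<alpha> \<le> fst \<beta>" "j * snd \<alpha> \<le> snd \<beta>"
  shows "degC a b (fst \<beta> - j * fst \<alpha>, snd \<beta> - j * snd \<alpha>) = degC a b \<beta> - j * degC a b \<alpha>"
proof -
  have "\<beta> = (j * fst \<alpha>, j * snd \<alpha>) + (fst \<beta> - j * fst \<alpha>, snd \<beta> - j * snd \<alpha>)"
    using assms by (simp add: prod_eq_iff)
  then have "degC a b \<beta> = j * degC a b \<alpha> + degC a b (fst \<beta> - j * fst \<alpha>, snd \<beta> - j * snd \<alpha>)"
    by (metis degC_add degC_scale)
  then show ?thesis by simp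
qed

lemma size_le_degC: "real (fst \<gamma> + snd \<gamma>) \<le> real (max a b) * degC a b \<gamma>"
proof -
  have "(fst \<gamma> + snd \<gamma>) * (a * b) \<le> max a b * weight \<gamma>"
    unfolding weight_def add_mult_distrib distrib_left
    by (intro add_mono) (simp_all add: mult_le_mono algebra_simps)
  then have "real (fst \<gamma> + snd \<gamma>) * (real a * real b) \<le> real (max a b) * real (weight \<gamma>)"
    by (metis of_nat_le_iff of_nat_mult)
  with a_pos b_pos show ?thesis by (simp add: degC_eq_weight field_simps)
qed

lemma precC_iff_weight:
  "precC a b \<beta> \<alpha> \<longleftrightarrow> weight \<beta> < weight \<alpha> \<or> (weight \<beta> = weight \<alpha> \<and> snd \<beta> < snd \<alpha>)"
  unfolding precC_def degC_eq_iff by (meson degC_le_iff not_le)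

lemma weight_snd_inj: "weight \<beta> = weight \<alpha> \<Longrightarrow> snd \<beta> = snd \<alpha> \<Longrightarrow> \<beta> = \<alpha>"
  using a_pos by (auto simp: weight_def prod_eq_iff)

lemma weight_add: "weight (\<alpha> + \<beta>) = weight \<alpha> + weight \<beta>"
  by (simp add: weight_def algebra_simps)

lemma precC_add:
  assumes "\<beta> = \<alpha> \<or> precC a b \<beta> \<alpha>" and "\<beta>' = \<alpha>' \<or> precC a b \<beta>' \<alpha>'"
  shows "\<beta> + \<beta>' = \<alpha> + \<alpha>' \<or> precC a b (\<beta> + \<beta>') (\<alpha> + \<alpha>')"
  using assms weight_snd_inj unfolding precC_iff_weight weight_add snd_add
  by (metis add_less_mono add_mono_thms_linordered_field(1,2))

lemma precC_add_eqD:
  assumes "\<beta> = \<alpha> \<or> precC a b \<beta> \<alpha>" and "\<beta>' = \<alpha>' \<or> precC a b \<beta>' \<alpha>'"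
    and "\<beta> + \<beta>' = \<alpha> + \<alpha>'"
  shows "\<beta> = \<alpha> \<and> \<beta>' = \<alpha>'"
proof -
  have "weight \<beta> + weight \<beta>' = weight \<alpha> + weight \<alpha>'" "snd \<beta> + snd \<beta>' = snd \<alpha> + snd \<alpha>'"
    using arg_cong[OF assms(3), of weight] arg_cong[OF assms(3), of snd] by (simp_all add: weight_add)
  moreover have "weight \<beta> \<le> weight \<alpha>" "weight \<beta>' \<le> weight \<alpha>'"
    using assms(1,2) by (auto simp: precC_iff_weight)
  ultimately have "weight \<beta> = weight \<alpha>" "weight \<beta>' = weight \<alpha>'" by linarith+
  moreover from this have "snd \<beta> \<le> snd \<alpha>" "snd \<beta>' \<le> snd \<alpha>'"
    using assms(1,2) by (auto simp: precC_iff_weight)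
  with \<open>snd \<beta> + snd \<beta>' = snd \<alpha> + snd \<alpha>'\<close> have "snd \<beta> = snd \<alpha>" "snd \<beta>' = snd \<alpha>'" by linarith+
  ultimately show ?thesis by (simp add: weight_snd_inj)
qed

lemma MC_iff: "p \<in> MC a b (degC a b \<alpha>) \<alpha> \<longleftrightarrow> p \<alpha> = 1 \<and> (\<forall>\<beta>\<in>supp p. \<beta> = \<alpha> \<or> precC a b \<beta> \<alpha>)"
proof -
  have "inPolyC a b (degC a b \<alpha>) p" if "\<forall>\<beta>\<in>supp p. \<beta> = \<alpha> \<or> precC a b \<beta> \<alpha>"
  proof -
    have "real (weight (j, l)) \<le> real (weight \<alpha>)" if "p (j, l) \<noteq> 0" for j l
    proof -
      have "(j, l) = \<alpha> \<or> precC a b (j, l) \<alpha>" using \<open>\<forall>\<beta>\<in>supp p. _\<close> that by (simp add: supp_def)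
      then show ?thesis by (auto simp: precC_iff_weight)
    qed
    then show ?thesis unfolding inPolyC_def degC_times by (simp add: weight_def)
  qed
  then show ?thesis unfolding MC_def supp_def by auto
qed

lemma weight_le_of_MC: "p \<in> MC a b (degC a b \<alpha>) \<alpha> \<Longrightarrow> \<beta> \<in> supp p \<Longrightarrow> weight \<beta> \<le> weight \<alpha>"
  by (auto simp: MC_iff precC_iff_weight)

lemma finite_supp_MC:
  assumes "p \<in> MC a b (degC a b \<alpha>) \<alpha>"
  shows "finite (supp p)"
proof (rule finite_subset)
  show "supp p \<subseteq> {..weight \<alpha>} \<times> {..weight \<alpha>}"
  proof
    fix \<beta> assume "\<beta> \<in> supp p"
    then have "weight \<beta> \<le> weight \<alpha>" using weight_le_of_MC[OF assms] by blast
    moreover have "fst \<beta> \<le> weight \<beta>" "snd \<beta> \<le> weight \<beta>"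
      using a_pos b_pos by (simp_all add: weight_def trans_le_add1 trans_le_add2)
    ultimately show "\<beta> \<in> {..weight \<alpha>} \<times> {..weight \<alpha>}" by (simp add: mem_Times_iff)
  qed
qed simp

lemma pmonom_in_MC: "pmonom \<alpha> \<in> MC a b (degC a b \<alpha>) \<alpha>"
  by (simp add: MC_iff pmonom_def supp_def)

lemma MC_nonempty: "MC a b (degC a b \<alpha>) \<alpha> \<noteq> {}"
  using pmonom_in_MC by blast

lemma pmult_in_MC:
  assumes p: "p \<in> MC a b (degC a b \<alpha>) \<alpha>" and q: "q \<in> MC a b (degC a b \<beta>) \<beta>"
  shows "pmult p q \<in> MC a b (degC a b (\<alpha> + \<beta>)) (\<alpha> + \<beta>)"
proof -
  have below_p: "\<gamma> = \<alpha> \<or> precC a b \<gamma> \<alpha>" if "\<gamma> \<in> supp p" for \<gamma>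
    using p that by (simp add: MC_iff)
  have below_q: "\<gamma>' = \<beta> \<or> precC a b \<gamma>' \<beta>" if "\<gamma>' \<in> supp q" for \<gamma>'
    using q that by (simp add: MC_iff)
  have sel: "\<gamma> + \<gamma>' = \<alpha> + \<beta> \<longleftrightarrow> (\<gamma>, \<gamma>') = (\<alpha>, \<beta>)" if "\<gamma> \<in> supp p" "\<gamma>' \<in> supp q" for \<gamma> \<gamma>'
    using precC_add_eqD[OF below_p below_q] that by blast
  have "pmult p q (\<alpha> + \<beta>) = (\<Sum>x \<in> supp p \<times> supp q. if x = (\<alpha>, \<beta>) then p (fst x) * q (snd x) else 0)"
    unfolding pmult_def using sel by (intro sum.cong refl) (auto simp: case_prod_beta mem_Times_iff)
  also have "\<dots> = 1"
    using p q finite_supp_MC[OF p] finite_supp_MC[OF q]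
    by (simp add: MC_iff supp_def)
  finally have "pmult p q (\<alpha> + \<beta>) = 1" .
  moreover have "\<gamma> = \<alpha> + \<beta> \<or> precC a b \<gamma> (\<alpha> + \<beta>)" if "\<gamma> \<in> supp (pmult p q)" for \<gamma>
    using that supp_pmult precC_add[OF below_p below_q] by fastforce
  ultimately show ?thesis by (simp add: MC_iff)
qed

lemma topC_eq: "topC a b (degC a b \<alpha>) p \<beta> = (if weight \<beta> = weight \<alpha> then p \<beta> else 0)"
  by (cases \<beta>) (simp add: topC_def degC_times weight_def flip: of_nat_mult of_nat_add)

lemma supp_topC: "supp (topC a b (degC a b \<alpha>) p) \<subseteq> supp p"
  by (auto simp: supp_def topC_eq)

lemma topC_in_MC:
  "p \<in> MC a b (degC a b \<alpha>) \<alpha> \<Longrightarrow> topC a b (degC a b \<alpha>) p \<in> MC a b (degC a b \<alpha>) \<alpha>"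
  using supp_topC by (fastforce simp: MC_iff topC_eq)

lemma zpow_circle_action: "zpow (\<zeta> ^ a * fst z, \<zeta> ^ b * snd z) \<beta> = \<zeta> ^ weight \<beta> * zpow z \<beta>"
  by (simp add: zpow_def weight_def power_mult_distrib power_add flip: power_mult)

lemma peval_circle_action:
  assumes "finite (supp p)"
  shows "peval p (\<zeta> ^ a * fst z, \<zeta> ^ b * snd z) = (\<Sum>\<beta>\<in>supp p. p \<beta> * \<zeta> ^ weight \<beta> * zpow z \<beta>)"
  using assms by (simp add: peval_eq_sum zpow_circle_action mult.assoc)

text \<open>The factor \<open>\<omega>\<^sup>r\<close> shifts each weight \<open>w \<le> weight \<alpha>\<close> to \<open>w + 1 \<in> [1, weight \<alpha> + 1]\<close>,
  so only the monomials of weight \<open>weight \<alpha>\<close> survive the averaging.\<close>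
lemma topC_circle_average:
  assumes "finite (supp p)" "\<forall>\<beta>\<in>supp p. weight \<beta> \<le> weight \<alpha>"
  defines "\<omega> \<equiv> exp (2 * of_real pi * \<i> / of_nat (weight \<alpha> + 1))"
  shows "of_nat (weight \<alpha> + 1) * peval (topC a b (degC a b \<alpha>) p) z
    = (\<Sum>r<weight \<alpha> + 1. \<omega> ^ r * peval p ((\<omega> ^ r) ^ a * fst z, (\<omega> ^ r) ^ b * snd z))"
proof -
  have shift: "\<omega> ^ r * (p \<beta> * (\<omega> ^ r) ^ weight \<beta> * zpow z \<beta>) = p \<beta> * zpow z \<beta> * (\<omega> ^ (weight \<beta> + 1)) ^ r"
    for r \<beta>
    by (simp add: power_mult_distrib power_mult[symmetric] mult.commute)
  have "(\<Sum>r<weight \<alpha> + 1. \<omega> ^ r * peval p ((\<omega> ^ r) ^ a * fst z, (\<omega> ^ r) ^ b * snd z))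
      = (\<Sum>\<beta>\<in>supp p. p \<beta> * zpow z \<beta> * (\<Sum>r<weight \<alpha> + 1. (\<omega> ^ (weight \<beta> + 1)) ^ r))"
    unfolding peval_circle_action[OF assms(1)] sum_distrib_left shift
    by (subst sum.swap) (simp add: mult_ac)
  also have "\<dots> = (\<Sum>\<beta>\<in>supp p. of_nat (weight \<alpha> + 1) * (topC a b (degC a b \<alpha>) p \<beta> * zpow z \<beta>))"
  proof (intro sum.cong refl)
    fix \<beta> assume "\<beta> \<in> supp p"
    then have "weight \<beta> \<le> weight \<alpha>" using assms(2) by blast
    have "weight \<alpha> + 1 dvd weight \<beta> + 1 \<longleftrightarrow> weight \<beta> = weight \<alpha>"
    proof
      assume "weight \<alpha> + 1 dvd weight \<beta> + 1"
      then have "weight \<alpha> + 1 \<le> weight \<beta> + 1" by (rule dvd_imp_le) simp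
      with \<open>weight \<beta> \<le> weight \<alpha>\<close> show "weight \<beta> = weight \<alpha>" by simp
    qed simp
    then show "p \<beta> * zpow z \<beta> * (\<Sum>r<weight \<alpha> + 1. (\<omega> ^ (weight \<beta> + 1)) ^ r)
        = of_nat (weight \<alpha> + 1) * (topC a b (degC a b \<alpha>) p \<beta> * zpow z \<beta>)"
      unfolding \<omega>_def by (subst sum_powers_root_unity) (auto simp: topC_eq)
  qed
  also have "\<dots> = of_nat (weight \<alpha> + 1) * peval (topC a b (degC a b \<alpha>) p) z"
    using assms(1) supp_topC by (simp add: peval_eq_sum sum_distrib_left)
  finally show ?thesis by simp
qed

end

section \<open>Sup norms on a compact set\<close>

locale nonempty_compact =
  fixes K :: "(complex \<times> complex) set"
  assumes compact: "compact K" and nonempty: "K \<noteq> {}"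

begin

lemma bdd_above_norm_peval: "bdd_above ((\<lambda>z. cmod (peval p z)) ` K)"
proof -
  have "continuous_on K (\<lambda>z. cmod (peval p z))"
    unfolding peval_def by (intro continuous_intros)
  then show ?thesis
    using compact by (intro bounded_imp_bdd_above compact_imp_bounded compact_continuous_image)
qed

lemma norm_peval_le_supnorm: "z \<in> K \<Longrightarrow> cmod (peval p z) \<le> supnorm K p"
  unfolding supnorm_def by (intro cSup_upper bdd_above_norm_peval imageI)

lemma supnorm_nonneg: "0 \<le> supnorm K p"
  using nonempty norm_peval_le_supnorm by (meson ex_in_conv norm_ge_zero order_trans)

lemma supnorm_le: "(\<And>z. z \<in> K \<Longrightarrow> cmod (peval p z) \<le> c) \<Longrightarrow> supnorm K p \<le> c"
  unfolding supnorm_def using nonempty by (intro cSup_least) auto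

lemma supnorm_pmult_le:
  assumes "finite (supp p)" "finite (supp q)"
  shows "supnorm K (pmult p q) \<le> supnorm K p * supnorm K q"
proof (rule supnorm_le)
  fix z assume "z \<in> K"
  then have "cmod (peval p z) * cmod (peval q z) \<le> supnorm K p * supnorm K q"
    by (intro mult_mono norm_peval_le_supnorm supnorm_nonneg) auto
  then show "cmod (peval (pmult p q) z) \<le> supnorm K p * supnorm K q"
    using assms by (simp add: peval_pmult norm_mult)
qed

lemma coordinate_bound: "\<exists>R\<ge>1. \<forall>z\<in>K. cmod (fst z) \<le> R \<and> cmod (snd z) \<le> R"
proof -
  obtain B where B: "\<forall>z\<in>K. norm z \<le> B"
    using compact_imp_bounded[OF compact] unfolding bounded_iff by blast
  have "cmod (fst z) \<le> norm z" "cmod (snd z) \<le> norm z" for z :: "complex \<times> complex"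
    using norm_fst_le[of "fst z" "snd z"] norm_snd_le[of "snd z" "fst z"] by simp_all
  with B have "\<forall>z\<in>K. cmod (fst z) \<le> max 1 B \<and> cmod (snd z) \<le> max 1 B"
    by (meson max.coboundedI2 order_trans)
  then show ?thesis by (intro exI[of _ "max 1 B"]) simp
qed

lemma supnorm_pmonom_le:
  assumes R: "\<forall>z\<in>K. cmod (fst z) \<le> R \<and> cmod (snd z) \<le> R"
  shows "supnorm K (pmonom \<gamma>) \<le> R ^ (fst \<gamma> + snd \<gamma>)"
proof (rule supnorm_le)
  fix z assume "z \<in> K"
  with R have "0 \<le> R" by (meson norm_ge_zero order_trans)
  with \<open>z \<in> K\<close> R have "cmod (fst z) ^ fst \<gamma> * cmod (snd z) ^ snd \<gamma> \<le> R ^ fst \<gamma> * R ^ snd \<gamma>"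
    by (intro mult_mono power_mono) auto
  then show "cmod (peval (pmonom \<gamma>) z) \<le> R ^ (fst \<gamma> + snd \<gamma>)"
    by (simp add: peval_pmonom zpow_def norm_mult norm_power power_add)
qed

end

section \<open>Multi-indices near a ray\<close>

definition ray_close :: "real \<times> real \<Rightarrow> real \<Rightarrow> real \<Rightarrow> nat \<times> nat \<Rightarrow> bool" where
  "ray_close \<theta> \<sigma> d \<alpha> \<longleftrightarrow>
     \<bar>real (fst \<alpha>) - fst \<theta> * d\<bar> < \<sigma> * fst \<theta> * d \<and> \<bar>real (snd \<alpha>) - snd \<theta> * d\<bar> < \<sigma> * snd \<theta> * d"

lemma div_mult_lower_bound:
  fixes A B :: nat and t \<sigma> d D :: real
  assumes "0 < t" "0 < \<sigma>" "\<sigma> < 1/3" "d \<le> \<sigma> * D"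
    and A: "\<bar>real A - t * d\<bar> < \<sigma> * t * d" and B: "\<bar>real B - t * D\<bar> < \<sigma> * t * D"
  shows "(1 - 3 * \<sigma>) * D \<le> real (B div A) * d"
proof -
  have "0 < \<sigma> * t * d" using A by linarith
  then have "0 < d" using zero_less_mult_pos[of "\<sigma> * t" d] assms(1,2) by simp
  have A_bounds: "(1 - \<sigma>) * t * d < real A" "real A < (1 + \<sigma>) * t * d"
    using A by (simp_all add: abs_less_iff algebra_simps)
  moreover have "0 < (1 - \<sigma>) * t * d" using \<open>0 < d\<close> assms(1,3) by simp
  ultimately have "0 < A" by linarith
  then have "B < B div A * A + A"
    using div_mult_mod_eq[of B A] mod_less_divisor[of A B] by linarith
  then have "real B < (real (B div A) + 1) * real A"
    by (metis distrib_right mult_1 of_nat_add of_nat_less_iff of_nat_mult)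
  also have "\<dots> \<le> (real (B div A) + 1) * ((1 + \<sigma>) * t * d)"
    using A_bounds by (intro mult_left_mono) auto
  finally have "t * ((1 - \<sigma>) * D) < t * ((1 + \<sigma>) * ((real (B div A) + 1) * d))"
    using B by (simp add: abs_less_iff algebra_simps)
  then have "(1 - \<sigma>) * D < (1 + \<sigma>) * ((real (B div A) + 1) * d)"
    using assms(1) by simp
  moreover have "(1 + \<sigma>) * ((1 - 2 * \<sigma>) * D) \<le> (1 - \<sigma>) * D"
  proof -
    have "0 < \<sigma> * D" using \<open>0 < d\<close> assms(4) by linarith
    then have "0 < D" using zero_less_mult_pos[of \<sigma> D] assms(2) by simp
    then show ?thesis using assms(2) by (simp add: algebra_simps)
  qed
  ultimately have "(1 + \<sigma>) * ((1 - 2 * \<sigma>) * D) < (1 + \<sigma>) * ((real (B div A) + 1) * d)"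
    by linarith
  then have "(1 - 2 * \<sigma>) * D < (real (B div A) + 1) * d"
    using assms(2) by simp
  with assms(4) show ?thesis by (simp add: algebra_simps)
qed

lemma ray_close_multiple:
  assumes "0 < fst \<theta>" "0 < snd \<theta>" "0 < \<sigma>" "\<sigma> < 1/3" "d \<le> \<sigma> * D"
    and "ray_close \<theta> \<sigma> d \<alpha>" "ray_close \<theta> \<sigma> D \<beta>"
  shows "(1 - 3 * \<sigma>) * D \<le> real (min (fst \<beta> div fst \<alpha>) (snd \<beta> div snd \<alpha>)) * d"
  using div_mult_lower_bound[of "fst \<theta>" \<sigma> d D "fst \<alpha>" "fst \<beta>"]
    div_mult_lower_bound[of "snd \<theta>" \<sigma> d D "snd \<alpha>" "snd \<beta>"] assms
  by (auto simp: ray_close_def min_def)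

definition admissible :: "nat \<Rightarrow> nat \<Rightarrow> real \<times> real \<Rightarrow> (nat \<Rightarrow> real) \<Rightarrow> (nat \<Rightarrow> nat \<times> nat) \<Rightarrow> bool" where
  "admissible a b \<theta> k \<alpha> \<longleftrightarrow> filterlim k at_top sequentially \<and> (\<forall>n. k n = degC a b (\<alpha> n)) \<and>
     ((\<lambda>n. scaled (\<alpha> n) (k n)) \<longlongrightarrow> \<theta>) sequentially"

lemma admissible_eventually_ray_close:
  assumes "admissible a b \<theta> k \<alpha>" "0 < \<sigma>" "0 < fst \<theta>" "0 < snd \<theta>" "0 < Z"
  shows "eventually (\<lambda>n. Z \<le> k n \<and> ray_close \<theta> \<sigma> (k n) (\<alpha> n)) sequentially"
proof -
  have k: "eventually (\<lambda>n. Z \<le> k n) sequentially"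
    using assms(1) unfolding admissible_def filterlim_at_top by blast
  have lim: "((\<lambda>n. scaled (\<alpha> n) (k n)) \<longlongrightarrow> \<theta>) sequentially"
    using assms(1) unfolding admissible_def by blast
  have "((\<lambda>n. real (fst (\<alpha> n)) / k n) \<longlongrightarrow> fst \<theta>) sequentially"
       "((\<lambda>n. real (snd (\<alpha> n)) / k n) \<longlongrightarrow> snd \<theta>) sequentially"
    using tendsto_fst[OF lim] tendsto_snd[OF lim] by (simp_all add: scaled_def)
  from this[THEN tendstoD] assms(2-4)
  have "eventually (\<lambda>n. dist (real (fst (\<alpha> n)) / k n) (fst \<theta>) < \<sigma> * fst \<theta>) sequentially"
       "eventually (\<lambda>n. dist (real (snd (\<alpha> n)) / k n) (snd \<theta>) < \<sigma> * snd \<theta>) sequentially"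
    by simp_all
  with k show ?thesis
  proof eventually_elim
    case (elim n)
    then have "0 < k n" using assms(5) by linarith
    have "\<bar>x - t * k n\<bar> = \<bar>x / k n - t\<bar> * k n" for x t
      using \<open>0 < k n\<close> by (simp add: abs_mult[symmetric] field_simps)
    with elim \<open>0 < k n\<close> show ?case by (simp add: ray_close_def dist_real_def)
  qed
qed

lemma admissible_eventually_degC_pos:
  assumes "admissible a b \<theta> k \<alpha>"
  shows "eventually (\<lambda>n. 0 < degC a b (\<alpha> n)) sequentially"
proof -
  from assms have "eventually (\<lambda>n. 0 < k n) sequentially" "\<forall>n. k n = degC a b (\<alpha> n)"
    unfolding admissible_def filterlim_at_top_dense by blast+
  then show ?thesis by simp
qed

lemma lower_bound_from_decomposition:
  fixes MA MB R c d D y y1 \<eta> L :: real and j :: nat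
  assumes "0 \<le> MA" "0 \<le> MB" "1 \<le> R" "0 \<le> c" "0 < d" "1 \<le> j"
    and decomp: "MB \<le> MA ^ j * R powr (c * (D - j * d))"
    and MB: "y1 < MB powr (1 / D)"
    and "j * d \<le> D" "D \<le> (1 + \<eta>) * (j * d)"
    and "0 < y" "y < y1" "0 \<le> L" "c * ln R - ln y1 \<le> L" "\<eta> * L \<le> ln y1 - ln y"
  shows "y < MA powr (1 / d)"
proof -
  define x where "x = j * d"
  have "0 < x" using assms(5,6) by (simp add: x_def)
  have "0 < MB" using MB assms(2,11,12) by (cases "MB = 0") auto
  have "0 < MA"
    using decomp \<open>0 < MB\<close> assms(1,6) by (cases "MA = 0") (auto simp: power_0_left)
  have "0 < D" using \<open>0 < x\<close> assms(9) by (simp add: x_def)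
  have "ln y1 < ln (MB powr (1 / D))"
    using MB assms(11,12) by (intro ln_less_cancel_iff[THEN iffD2]) auto
  also have "\<dots> = ln MB / D"
    using \<open>0 < MB\<close> by simp
  finally have "D * ln y1 < ln MB"
    using \<open>0 < D\<close> by (simp add: field_simps)
  also have "ln MB \<le> ln (MA ^ j * R powr (c * (D - x)))"
    using decomp \<open>0 < MB\<close> \<open>0 < MA\<close> assms(3) by (intro ln_le_cancel_iff[THEN iffD2]) (auto simp: x_def)
  also have "\<dots> = j * ln MA + c * (D - x) * ln R"
    using \<open>0 < MA\<close> assms(3) by (simp add: ln_mult ln_realpow)
  finally have main: "x * ln y1 - (D - x) * (c * ln R - ln y1) < j * ln MA"
    by (simp add: algebra_simps)
  have "(D - x) * (c * ln R - ln y1) \<le> (D - x) * L"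
    using assms(9,14) by (intro mult_left_mono) (auto simp: x_def)
  also have "\<dots> \<le> (\<eta> * x) * L"
    using assms(10,13) by (intro mult_right_mono) (auto simp: x_def algebra_simps)
  also have "\<dots> = x * (\<eta> * L)"
    by simp
  also have "\<dots> \<le> x * (ln y1 - ln y)"
    using assms(15) \<open>0 < x\<close> by (intro mult_left_mono) auto
  finally have "real j * (d * ln y) < real j * ln MA"
    using main by (simp add: x_def right_diff_distrib mult.assoc)
  then have "ln y < ln (MA powr (1 / d))"
    using \<open>0 < MA\<close> assms(5,6) by (simp add: field_simps)
  then show ?thesis
    using \<open>0 < MA\<close> assms(11) by (subst (asm) ln_less_cancel_iff) auto
qed

section \<open>Minimal norms and the directional Chebyshev constant\<close>

lemma le_cInf_mult:
  fixes S :: "real set"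
  assumes "S \<noteq> {}" "0 \<le> s" "\<And>x. x \<in> S \<Longrightarrow> c \<le> x * s"
  shows "c \<le> Inf S * s"
proof (cases "s = 0")
  case True
  with assms show ?thesis by force
next
  case False
  with assms have "c / s \<le> Inf S"
    by (intro cInf_greatest) (auto simp: divide_le_eq)
  with False assms(2) show ?thesis by (simp add: divide_le_eq)
qed

locale chebyshev_setting = weighted_degree a b + nonempty_compact K
  for a b :: nat and K :: "(complex \<times> complex) set"

begin

definition cheb_norm :: "nat \<times> nat \<Rightarrow> real" where
  "cheb_norm \<alpha> = Inf (supnorm K ` MC a b (degC a b \<alpha>) \<alpha>)"

definition cheb_root :: "nat \<times> nat \<Rightarrow> real" where
  "cheb_root \<alpha> = cheb_norm \<alpha> powr (1 / degC a b \<alpha>)"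

lemma TC_degC: "TC a b K (degC a b \<alpha>) \<alpha> = cheb_root \<alpha>"
  by (simp add: TC_def cheb_root_def cheb_norm_def)

lemma cheb_root_nonneg: "0 \<le> cheb_root \<alpha>"
  by (simp add: cheb_root_def)

lemma cheb_norm_le_supnorm: "p \<in> MC a b (degC a b \<alpha>) \<alpha> \<Longrightarrow> cheb_norm \<alpha> \<le> supnorm K p"
  unfolding cheb_norm_def by (intro cInf_lower imageI bdd_belowI[of _ 0]) (auto simp: supnorm_nonneg)

lemma cheb_norm_nonneg: "0 \<le> cheb_norm \<alpha>"
  unfolding cheb_norm_def using MC_nonempty by (intro cInf_greatest) (auto simp: supnorm_nonneg)

lemma cheb_norm_add_le: "cheb_norm (\<alpha> + \<beta>) \<le> cheb_norm \<alpha> * cheb_norm \<beta>"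
proof -
  have prod: "cheb_norm (\<alpha> + \<beta>) \<le> supnorm K p * supnorm K q"
    if "p \<in> MC a b (degC a b \<alpha>) \<alpha>" "q \<in> MC a b (degC a b \<beta>) \<beta>" for p q
    using cheb_norm_le_supnorm[OF pmult_in_MC[OF that]] supnorm_pmult_le finite_supp_MC that
    by (meson order_trans)
  have "cheb_norm (\<alpha> + \<beta>) \<le> cheb_norm \<alpha> * supnorm K q" if "q \<in> MC a b (degC a b \<beta>) \<beta>" for q
    unfolding cheb_norm_def[of \<alpha>] using MC_nonempty prod[OF _ that]
    by (intro le_cInf_mult supnorm_nonneg) auto
  then have "cheb_norm (\<alpha> + \<beta>) \<le> cheb_norm \<beta> * cheb_norm \<alpha>"
    unfolding cheb_norm_def[of \<beta>] using MC_nonempty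
    by (intro le_cInf_mult cheb_norm_nonneg) (auto simp: mult.commute)
  then show ?thesis by (simp add: mult.commute)
qed

lemma cheb_norm_scale_add_le:
  "cheb_norm ((j * fst \<alpha>, j * snd \<alpha>) + \<gamma>) \<le> cheb_norm \<alpha> ^ j * cheb_norm \<gamma>"
proof (induction j)
  case (Suc j)
  have "(Suc j * fst \<alpha>, Suc j * snd \<alpha>) + \<gamma> = \<alpha> + ((j * fst \<alpha>, j * snd \<alpha>) + \<gamma>)"
    by (simp add: prod_eq_iff)
  then have "cheb_norm ((Suc j * fst \<alpha>, Suc j * snd \<alpha>) + \<gamma>)
      \<le> cheb_norm \<alpha> * cheb_norm ((j * fst \<alpha>, j * snd \<alpha>) + \<gamma>)"
    using cheb_norm_add_le by presburger
  also have "\<dots> \<le> cheb_norm \<alpha> * (cheb_norm \<alpha> ^ j * cheb_norm \<gamma>)"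
    by (intro mult_left_mono Suc.IH cheb_norm_nonneg)
  finally show ?case by (simp add: mult.assoc)
qed (simp flip: zero_prod_def)

lemma cheb_norm_le_power:
  assumes "\<forall>z\<in>K. cmod (fst z) \<le> R \<and> cmod (snd z) \<le> R"
  shows "cheb_norm \<gamma> \<le> R ^ (fst \<gamma> + snd \<gamma>)"
  using cheb_norm_le_supnorm[OF pmonom_in_MC] supnorm_pmonom_le[OF assms] by (rule order_trans)

lemma cheb_norm_le_powr_degC:
  assumes "1 \<le> R" "\<forall>z\<in>K. cmod (fst z) \<le> R \<and> cmod (snd z) \<le> R"
  shows "cheb_norm \<gamma> \<le> R powr (max a b * degC a b \<gamma>)"
proof -
  have "cheb_norm \<gamma> \<le> R powr real (fst \<gamma> + snd \<gamma>)"
    using cheb_norm_le_power[OF assms(2)] assms(1) by (simp add: powr_realpow del: of_nat_add)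
  also have "\<dots> \<le> R powr (max a b * degC a b \<gamma>)"
    using size_le_degC assms(1) by (intro powr_mono) auto
  finally show ?thesis .
qed

lemma cheb_norm_decompose_le:
  assumes "1 \<le> R" "\<forall>z\<in>K. cmod (fst z) \<le> R \<and> cmod (snd z) \<le> R"
    and "j * fst \<alpha> \<le> fst \<beta>" "j * snd \<alpha> \<le> snd \<beta>"
  shows "cheb_norm \<beta> \<le> cheb_norm \<alpha> ^ j * R powr (max a b * (degC a b \<beta> - j * degC a b \<alpha>))"
proof -
  define \<gamma> where "\<gamma> = (fst \<beta> - j * fst \<alpha>, snd \<beta> - j * snd \<alpha>)"
  have "\<beta> = (j * fst \<alpha>, j * snd \<alpha>) + \<gamma>"
    using assms(3,4) by (simp add: \<gamma>_def prod_eq_iff)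
  then have "cheb_norm \<beta> \<le> cheb_norm \<alpha> ^ j * cheb_norm \<gamma>"
    using cheb_norm_scale_add_le by presburger
  also have "\<dots> \<le> cheb_norm \<alpha> ^ j * R powr (max a b * degC a b \<gamma>)"
    by (intro mult_left_mono cheb_norm_le_powr_degC assms(1,2) zero_le_power cheb_norm_nonneg)
  finally show ?thesis
    using degC_sub_scale[OF assms(3,4)] by (simp add: \<gamma>_def)
qed

lemma cheb_root_le_powr:
  assumes "1 \<le> R" "\<forall>z\<in>K. cmod (fst z) \<le> R \<and> cmod (snd z) \<le> R" and "0 < degC a b \<alpha>"
  shows "cheb_root \<alpha> \<le> R powr max a b"
proof -
  have "cheb_root \<alpha> \<le> (R powr (max a b * degC a b \<alpha>)) powr (1 / degC a b \<alpha>)"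
    unfolding cheb_root_def using assms(3)
    by (intro powr_mono2 cheb_norm_nonneg cheb_norm_le_powr_degC assms(1,2)) auto
  also have "\<dots> = R powr max a b"
    using assms(3) by (simp add: powr_powr)
  finally show ?thesis .
qed

lemma cheb_root_le_supnorm_powr:
  "p \<in> MC a b (degC a b \<alpha>) \<alpha> \<Longrightarrow> cheb_root \<alpha> \<le> supnorm K p powr (1 / degC a b \<alpha>)"
  unfolding cheb_root_def by (intro powr_mono2 cheb_norm_nonneg cheb_norm_le_supnorm) (simp_all add: degC_nonneg)

lemma cheb_root_bounded: "\<exists>B. \<forall>\<alpha>. 0 < degC a b \<alpha> \<longrightarrow> cheb_root \<alpha> \<le> B"
  using coordinate_bound cheb_root_le_powr by blast

lemma cheb_norm_reduce_ray_close:
  assumes "1 \<le> R" "\<forall>z\<in>K. cmod (fst z) \<le> R \<and> cmod (snd z) \<le> R"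
    and "0 < fst \<theta>" "0 < snd \<theta>" "0 < \<sigma>" "\<sigma> < 1/3"
    and "0 < degC a b \<alpha>" "degC a b \<alpha> \<le> \<sigma> * degC a b \<beta>"
    and "ray_close \<theta> \<sigma> (degC a b \<alpha>) \<alpha>" "ray_close \<theta> \<sigma> (degC a b \<beta>) \<beta>"
  obtains j :: nat where "1 \<le> j" "j * degC a b \<alpha> \<le> degC a b \<beta>"
    "(1 - 3 * \<sigma>) * degC a b \<beta> \<le> j * degC a b \<alpha>"
    "cheb_norm \<beta> \<le> cheb_norm \<alpha> ^ j * R powr (max a b * (degC a b \<beta> - j * degC a b \<alpha>))"
proof
  define j where "j = min (fst \<beta> div fst \<alpha>) (snd \<beta> div snd \<alpha>)"
  have "j * fst \<alpha> \<le> fst \<beta> div fst \<alpha> * fst \<alpha>" "j * snd \<alpha> \<le> snd \<beta> div snd \<alpha> * snd \<alpha>"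
    unfolding j_def by (simp_all add: mult_le_mono1)
  then have fits: "j * fst \<alpha> \<le> fst \<beta>" "j * snd \<alpha> \<le> snd \<beta>"
    using div_times_less_eq_dividend order_trans by blast+
  show "(1 - 3 * \<sigma>) * degC a b \<beta> \<le> j * degC a b \<alpha>"
    unfolding j_def using assms(3-6,8-10) by (rule ray_close_multiple)
  moreover have "0 < degC a b \<beta>"
    using assms(5,7,8) zero_less_mult_pos[of \<sigma> "degC a b \<beta>"] by linarith
  then have "0 < (1 - 3 * \<sigma>) * degC a b \<beta>"
    using assms(6) by simp
  ultimately show "1 \<le> j" by (cases j) auto
  show "j * degC a b \<alpha> \<le> degC a b \<beta>"
    using degC_sub_scale[OF fits] degC_nonneg by (metis diff_ge_0_iff_ge)
  show "cheb_norm \<beta> \<le> cheb_norm \<alpha> ^ j * R powr (max a b * (degC a b \<beta> - j * degC a b \<alpha>))"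
    using cheb_norm_decompose_le[OF assms(1,2) fits] .
qed

lemma less_cheb_root_of_ray_close:
  assumes R: "1 \<le> R" "\<forall>z\<in>K. cmod (fst z) \<le> R \<and> cmod (snd z) \<le> R"
    and \<theta>: "0 < fst \<theta>" "0 < snd \<theta>" and \<sigma>: "0 < \<sigma>" "\<sigma> < 1/3"
    and \<sigma>_\<eta>: "(1 - 3 * \<sigma>) * (1 + \<eta>) = 1" "0 \<le> \<eta>"
    and L: "0 \<le> L" "max a b * ln R - ln y1 \<le> L" "\<eta> * L \<le> ln y1 - ln y"
    and y: "0 < y" "y < y1"
    and "1 \<le> degC a b \<alpha>" "degC a b \<alpha> \<le> \<sigma> * degC a b \<beta>"
    and "ray_close \<theta> \<sigma> (degC a b \<alpha>) \<alpha>" "ray_close \<theta> \<sigma> (degC a b \<beta>) \<beta>"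
    and "y1 < cheb_root \<beta>"
  shows "y < cheb_root \<alpha>"
proof -
  have "0 < degC a b \<alpha>" using assms(14) by simp
  then obtain j :: nat where j: "1 \<le> j" "j * degC a b \<alpha> \<le> degC a b \<beta>"
    "(1 - 3 * \<sigma>) * degC a b \<beta> \<le> j * degC a b \<alpha>"
    "cheb_norm \<beta> \<le> cheb_norm \<alpha> ^ j * R powr (max a b * (degC a b \<beta> - j * degC a b \<alpha>))"
    using cheb_norm_reduce_ray_close[OF R \<theta> \<sigma> _ assms(15-17)] by blast
  have "degC a b \<beta> = (1 + \<eta>) * ((1 - 3 * \<sigma>) * degC a b \<beta>)"
    by (metis \<sigma>_\<eta>(1) mult.assoc mult.commute mult_1)
  also have "\<dots> \<le> (1 + \<eta>) * (j * degC a b \<alpha>)"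
    using j(3) \<sigma>_\<eta>(2) by (intro mult_left_mono) auto
  finally have "degC a b \<beta> \<le> (1 + \<eta>) * (j * degC a b \<alpha>)" .
  with j assms(14,18) have "y < cheb_norm \<alpha> powr (1 / degC a b \<alpha>)"
    by (intro lower_bound_from_decomposition[OF cheb_norm_nonneg cheb_norm_nonneg R(1) _ _ _ _ _ _ _ y L])
      (simp_all add: cheb_root_def)
  then show ?thesis by (simp add: cheb_root_def)
qed

lemma eventually_less_cheb_root:
  assumes A: "admissible a b \<theta> kA \<alpha>A" and B: "admissible a b \<theta> kB \<alpha>B"
    and \<theta>: "0 < fst \<theta>" "0 < snd \<theta>" and y: "0 < y" "y < y1"
    and freq: "frequently (\<lambda>m. y1 < cheb_root (\<alpha>B m)) sequentially"
  shows "eventually (\<lambda>n. y < cheb_root (\<alpha>A n)) sequentially"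
proof -
  obtain R where R: "1 \<le> R" "\<forall>z\<in>K. cmod (fst z) \<le> R \<and> cmod (snd z) \<le> R"
    using coordinate_bound by blast
  \<comment> \<open>\<open>\<sigma>\<close> is chosen with \<open>1 / (1 - 3\<sigma>) = 1 + \<eta>\<close>, and \<open>\<eta>\<close> small enough that the loss
    \<open>\<eta> L\<close> stays below \<open>ln y1 - ln y\<close>.\<close>
  define L where "L = max 0 (max a b * ln R - ln y1)"
  define \<eta> where "\<eta> = (ln y1 - ln y) / (L + 1)"
  define \<sigma> where "\<sigma> = \<eta> / (3 * (1 + \<eta>))"
  have L: "0 \<le> L" "max a b * ln R - ln y1 \<le> L" by (simp_all add: L_def)
  have "ln y < ln y1" using y by simp
  then have "0 < \<eta>" using \<open>0 \<le> L\<close> by (simp add: \<eta>_def)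
  have "\<eta> * L \<le> ln y1 - ln y"
    using \<open>0 \<le> L\<close> \<open>ln y < ln y1\<close> by (simp add: \<eta>_def field_simps)
  have "0 < \<sigma>" "\<sigma> < 1/3" "(1 - 3 * \<sigma>) * (1 + \<eta>) = 1"
    using \<open>0 < \<eta>\<close> by (simp_all add: \<sigma>_def field_simps)
  show ?thesis
    using admissible_eventually_ray_close[OF A \<open>0 < \<sigma>\<close> \<theta> zero_less_one]
  proof eventually_elim
    case (elim n)
    have "1 \<le> degC a b (\<alpha>A n)" "ray_close \<theta> \<sigma> (degC a b (\<alpha>A n)) (\<alpha>A n)"
      using elim A unfolding admissible_def by metis+
    then have "0 < degC a b (\<alpha>A n) / \<sigma>" using \<open>0 < \<sigma>\<close> by simp
    from frequently_ex[OF frequently_eventually_conj[OF freq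
        admissible_eventually_ray_close[OF B \<open>0 < \<sigma>\<close> \<theta> this]]]
    obtain m where "degC a b (\<alpha>A n) / \<sigma> \<le> kB m" "ray_close \<theta> \<sigma> (kB m) (\<alpha>B m)"
      "y1 < cheb_root (\<alpha>B m)"
      by blast
    moreover have "kB m = degC a b (\<alpha>B m)" using B unfolding admissible_def by blast
    ultimately show "y < cheb_root (\<alpha>A n)"
      using less_cheb_root_of_ray_close[OF R \<theta> \<open>0 < \<sigma>\<close> \<open>\<sigma> < 1/3\<close> \<open>(1 - 3 * \<sigma>) * (1 + \<eta>) = 1\<close> _ L
          \<open>\<eta> * L \<le> ln y1 - ln y\<close> y] \<open>0 < \<eta>\<close> \<open>0 < \<sigma>\<close>
        \<open>1 \<le> degC a b (\<alpha>A n)\<close> \<open>ray_close \<theta> \<sigma> (degC a b (\<alpha>A n)) (\<alpha>A n)\<close>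
      by (simp add: field_simps)
  qed
qed

lemma Limsup_cheb_root_le_Liminf:
  assumes A: "admissible a b \<theta> kA \<alpha>A" and B: "admissible a b \<theta> kB \<alpha>B"
    and \<theta>: "0 < fst \<theta>" "0 < snd \<theta>"
  shows "Limsup sequentially (\<lambda>n. ereal (cheb_root (\<alpha>B n)))
    \<le> Liminf sequentially (\<lambda>n. ereal (cheb_root (\<alpha>A n)))"
  unfolding le_Liminf_iff
proof (intro allI impI)
  fix y assume y: "y < Limsup sequentially (\<lambda>n. ereal (cheb_root (\<alpha>B n)))"
  show "eventually (\<lambda>n. y < ereal (cheb_root (\<alpha>A n))) sequentially"
  proof (cases "y < 0")
    case True
    then show ?thesis using cheb_root_nonneg by (simp add: order.strict_trans2)
  next
    case False
    obtain y1 where "y < y1" "y1 < Limsup sequentially (\<lambda>n. ereal (cheb_root (\<alpha>B n)))"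
      using dense[OF y] by blast
    moreover from this False obtain r s where "y = ereal r" "y1 = ereal s" "0 \<le> r"
      by (cases y; cases y1) auto
    ultimately have "r < s" by simp
    have freq: "frequently (\<lambda>m. s < cheb_root (\<alpha>B m)) sequentially"
    proof (rule ccontr)
      assume "\<not> ?thesis"
      then have "eventually (\<lambda>m. ereal (cheb_root (\<alpha>B m)) \<le> y1) sequentially"
        by (simp add: not_frequently not_less \<open>y1 = ereal s\<close>)
      then have "Limsup sequentially (\<lambda>n. ereal (cheb_root (\<alpha>B n))) \<le> y1"
        by (rule Limsup_bounded)
      with \<open>y1 < Limsup sequentially _\<close> show False by simp
    qed
    have "eventually (\<lambda>n. (r + s) / 2 < cheb_root (\<alpha>A n)) sequentially"
      using \<open>0 \<le> r\<close> \<open>r < s\<close> by (intro eventually_less_cheb_root[OF A B \<theta> _ _ freq]) auto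
    then show ?thesis
      by eventually_elim (use \<open>y = ereal r\<close> \<open>r < s\<close> in simp)
  qed
qed

lemma cheb_root_limit_exists:
  assumes A: "admissible a b \<theta> k \<alpha>" and \<theta>: "0 < fst \<theta>" "0 < snd \<theta>"
  obtains t where "\<And>k' \<alpha>'. admissible a b \<theta> k' \<alpha>' \<Longrightarrow> ((\<lambda>n. cheb_root (\<alpha>' n)) \<longlongrightarrow> t) sequentially"
proof -
  define X where "X \<beta> = Limsup sequentially (\<lambda>n. ereal (cheb_root (\<beta> n)))"
    for \<beta> :: "nat \<Rightarrow> nat \<times> nat"
  define Y where "Y \<beta> = Liminf sequentially (\<lambda>n. ereal (cheb_root (\<beta> n)))"
    for \<beta> :: "nat \<Rightarrow> nat \<times> nat"
  have Y_le_X: "Y \<beta> \<le> X \<beta>" for \<beta>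
    unfolding X_def Y_def by (simp add: Liminf_le_Limsup)
  obtain B where B: "\<And>\<beta>. 0 < degC a b \<beta> \<Longrightarrow> cheb_root \<beta> \<le> B"
    using cheb_root_bounded by blast
  have "eventually (\<lambda>n. ereal (cheb_root (\<alpha> n)) \<le> ereal B) sequentially"
    using admissible_eventually_degC_pos[OF A] by eventually_elim (simp add: B)
  then have "X \<alpha> \<le> ereal B"
    unfolding X_def by (rule Limsup_bounded)
  moreover have "0 \<le> Y \<alpha>"
    unfolding Y_def by (intro Liminf_bounded) (simp add: cheb_root_nonneg)
  ultimately obtain t where t: "X \<alpha> = ereal t"
    using Y_le_X[of \<alpha>] by (cases "X \<alpha>") auto
  show ?thesis
  proof
    fix k' \<alpha>' assume B: "admissible a b \<theta> k' \<alpha>'"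
    have "X \<alpha>' \<le> Y \<alpha>" "X \<alpha> \<le> Y \<alpha>'"
      unfolding X_def Y_def using Limsup_cheb_root_le_Liminf[OF _ _ \<theta>] A B by blast+
    with t Y_le_X[of \<alpha>] Y_le_X[of \<alpha>'] have "Y \<alpha>' = ereal t" "X \<alpha>' = ereal t"
      by (metis antisym order_trans)+
    then have "((\<lambda>n. ereal (cheb_root (\<alpha>' n))) \<longlongrightarrow> ereal t) sequentially"
      unfolding X_def Y_def by (intro Liminf_eq_Limsup) auto
    then show "((\<lambda>n. cheb_root (\<alpha>' n)) \<longlongrightarrow> t) sequentially"
      by simp
  qed
qed

lemma tendsto_TC_tau:
  assumes A: "admissible a b \<theta> k \<alpha>" and \<theta>: "0 < fst \<theta>" "0 < snd \<theta>"
  shows "((\<lambda>n. TC a b K (k n) (\<alpha> n)) \<longlongrightarrow> tau a b K \<theta>) sequentially"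
proof -
  obtain t where cheb_root_lim:
    "\<And>k' \<alpha>'. admissible a b \<theta> k' \<alpha>' \<Longrightarrow> ((\<lambda>n. cheb_root (\<alpha>' n)) \<longlongrightarrow> t) sequentially"
    using cheb_root_limit_exists[OF A \<theta>] by blast
  have limit: "((\<lambda>n. TC a b K (k' n) (\<alpha>' n)) \<longlongrightarrow> t) sequentially"
    if "admissible a b \<theta> k' \<alpha>'" for k' \<alpha>'
  proof -
    have "TC a b K (k' n) (\<alpha>' n) = cheb_root (\<alpha>' n)" for n
      using that unfolding admissible_def by (simp add: TC_degC)
    with cheb_root_lim[OF that] show ?thesis by simp
  qed
  have "tau a b K \<theta> = t"
    unfolding tau_def
  proof (rule the_equality)
    fix t' assume "\<forall>k \<alpha>. filterlim k at_top sequentially \<and> (\<forall>n. k n = degC a b (\<alpha> n)) \<and>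
      ((\<lambda>n. scaled (\<alpha> n) (k n)) \<longlongrightarrow> \<theta>) sequentially \<longrightarrow>
      ((\<lambda>n. TC a b K (k n) (\<alpha> n)) \<longlongrightarrow> t') sequentially"
    with A have "((\<lambda>n. TC a b K (k n) (\<alpha> n)) \<longlongrightarrow> t') sequentially"
      unfolding admissible_def by blast
    then show "t' = t" using limit[OF A] LIMSEQ_unique by blast
  qed (use limit in \<open>unfold admissible_def, blast\<close>)
  with limit[OF A] show ?thesis by simp
qed

lemma supnorm_topC_le:
  assumes circle: "\<And>(t::real) z. z \<in> K \<Longrightarrow> (exp (\<i> * t) ^ a * fst z, exp (\<i> * t) ^ b * snd z) \<in> K"
    and p: "p \<in> MC a b (degC a b \<alpha>) \<alpha>"
  shows "supnorm K (topC a b (degC a b \<alpha>) p) \<le> supnorm K p"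
proof (rule supnorm_le)
  fix z assume "z \<in> K"
  define N where "N = weight \<alpha> + 1"
  define \<omega> where "\<omega> = exp (2 * of_real pi * \<i> / of_nat N)"
  define orbit where "orbit r = ((\<omega> ^ r) ^ a * fst z, (\<omega> ^ r) ^ b * snd z)" for r
  have \<omega>_power: "\<omega> ^ r = exp (\<i> * of_real (2 * pi * real r / real N))" for r
    unfolding \<omega>_def exp_of_nat_mult[symmetric] by (simp add: mult_ac)
  have orbit_in_K: "orbit r \<in> K" for r
    using circle[OF \<open>z \<in> K\<close>, of "2 * pi * real r / real N"] by (simp only: orbit_def \<omega>_power)
  have "real N * cmod (peval (topC a b (degC a b \<alpha>) p) z)
      = cmod (of_nat N * peval (topC a b (degC a b \<alpha>) p) z)"
    by (simp add: norm_mult)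
  also have "\<dots> = cmod (\<Sum>r<N. \<omega> ^ r * peval p (orbit r))"
    using topC_circle_average[OF finite_supp_MC[OF p] ballI[OF weight_le_of_MC[OF p]]]
    by (simp add: N_def \<omega>_def orbit_def)
  also have "\<dots> \<le> (\<Sum>r<N. cmod (peval p (orbit r)))"
    by (rule order_trans[OF norm_sum]) (simp add: norm_mult norm_power \<omega>_def)
  also have "\<dots> \<le> (\<Sum>r<N. supnorm K p)"
    by (intro sum_mono norm_peval_le_supnorm orbit_in_K)
  also have "\<dots> = real N * supnorm K p"
    by simp
  finally show "cmod (peval (topC a b (degC a b \<alpha>) p) z) \<le> supnorm K p"
    by (simp add: N_def)
qed


lemma tendsto_supnorm_topC_root:
  assumes circle: "\<And>(t::real) z. z \<in> K \<Longrightarrow> (exp (\<i> * t) ^ a * fst z, exp (\<i> * t) ^ b * snd z) \<in> K"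
    and adm: "admissible a b \<theta> k \<alpha>" and \<theta>: "0 < fst \<theta>" "0 < snd \<theta>"
    and Q: "\<And>n. Q n \<in> MC a b (k n) (\<alpha> n)"
    and lim: "((\<lambda>n. supnorm K (Q n) powr (1 / k n)) \<longlongrightarrow> tau a b K \<theta>) sequentially"
  shows "((\<lambda>n. supnorm K (topC a b (k n) (Q n)) powr (1 / k n)) \<longlongrightarrow> tau a b K \<theta>) sequentially"
proof -
  have deg: "k n = degC a b (\<alpha> n)" for n
    using adm unfolding admissible_def by blast
  note Q' = Q[unfolded deg]
  have "TC a b K (k n) (\<alpha> n) \<le> supnorm K (topC a b (k n) (Q n)) powr (1 / k n)" for n
    using cheb_root_le_supnorm_powr[OF topC_in_MC[OF Q']] by (simp add: deg TC_degC)
  moreover have "supnorm K (topC a b (k n) (Q n)) powr (1 / k n) \<le> supnorm K (Q n) powr (1 / k n)" for n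
    using supnorm_topC_le[OF circle Q'] by (simp add: deg powr_mono2 supnorm_nonneg degC_nonneg)
  ultimately show ?thesis
    using tendsto_sandwich[OF _ _ tendsto_TC_tau[OF adm \<theta>] lim] by (simp add: always_eventually)
qed

end

lemma CurveC_pos:
  assumes "0 < a" "0 < b" "\<theta> \<in> CurveC a b"
  shows "0 < fst \<theta>" "0 < snd \<theta>"
proof -
  have on_line: "real a * fst \<theta> + real b * snd \<theta> = real a * real b" and "0 < fst \<theta> * snd \<theta>"
    using assms(3) by (auto simp: CurveC_def)
  have "\<not> (fst \<theta> < 0 \<and> snd \<theta> < 0)"
  proof
    assume "fst \<theta> < 0 \<and> snd \<theta> < 0"
    then have "real a * fst \<theta> + real b * snd \<theta> < 0"
      using assms(1,2) by (simp add: add_neg_neg mult_pos_neg)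
    moreover have "0 < real a * real b" using assms(1,2) by simp
    ultimately show False using on_line by linarith
  qed
  with \<open>0 < fst \<theta> * snd \<theta>\<close> show "0 < fst \<theta>" "0 < snd \<theta>"
    by (auto simp: zero_less_mult_iff)
qed

theorem proposition8p1:
  fixes a b :: nat and K :: "(complex \<times> complex) set" and \<theta> :: "real \<times> real"
    and Q :: "nat \<Rightarrow> poly2" and k :: "nat \<Rightarrow> real" and \<alpha> :: "nat \<Rightarrow> nat \<times> nat"
  assumes "a > 0" and "b > 0" and "coprime a b"
    and "compact K" and "\<not> pluripolar K"
    and "\<And>t::real. (\<lambda>z. (exp (\<i> * t) ^ a * fst z, exp (\<i> * t) ^ b * snd z)) ` K = K"
    and "\<theta> \<in> CurveC a b"
    and "asymp_cheb a b K \<theta> Q k \<alpha>"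
  shows "asymp_cheb a b K \<theta> (\<lambda>n. topC a b (k n) (Q n)) k \<alpha>"
proof -
  interpret weighted_degree a b by unfold_locales (use assms(1,2) in auto)
  note cheb = assms(8)[unfolded asymp_cheb_def]
  have adm: "admissible a b \<theta> k \<alpha>" and deg: "\<And>n. k n = degC a b (\<alpha> n)"
    and Q: "\<And>n. Q n \<in> MC a b (k n) (\<alpha> n)"
    and lim: "((\<lambda>n. supnorm K (Q n) powr (1 / k n)) \<longlongrightarrow> tau a b K \<theta>) sequentially"
    using cheb unfolding admissible_def by blast+
  have "((\<lambda>n. supnorm K (topC a b (k n) (Q n)) powr (1 / k n)) \<longlongrightarrow> tau a b K \<theta>) sequentially"
  proof (cases "K = {}")
    \<comment> \<open>Every sup norm on the empty set is the junk value \<open>Sup {}\<close>.\<close>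
    case True
    with lim show ?thesis by (simp add: supnorm_def)
  next
    case False
    interpret chebyshev_setting a b K by unfold_locales (use assms(4) False in auto)
    have circle: "(exp (\<i> * t) ^ a * fst z, exp (\<i> * t) ^ b * snd z) \<in> K"
      if "z \<in> K" for z and t :: real
      using imageI[OF that, of "\<lambda>z. (exp (\<i> * t) ^ a * fst z, exp (\<i> * t) ^ b * snd z)"]
      by (simp only: assms(6))
    show ?thesis
      by (rule tendsto_supnorm_topC_root[OF circle adm CurveC_pos[OF assms(1,2,7)] Q lim])
  qed
  moreover have "topC a b (k n) (Q n) \<in> MC a b (k n) (\<alpha> n)" for n
    using topC_in_MC Q deg by metis
  ultimately show ?thesis using cheb unfolding asymp_cheb_def by blast
qed

end
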